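(* Suppose that $H$ has a $U_\ell$-operator, where $\ell$ is a prime dividing $N$ and $s\ge1$ is the $\ell$-adic valuation of $N$. Let $g,h$ be relatively prime divisors of $N$ not divisible by $\ell$, let $\chi\in X_N$, $\psi=\theta\chi^{-1}$, and let $t\le s$ be a positive integer such that $f_\chi$ divides $N/\ell^t$. If $t<s$, then $$U_\ell\,\alpha^{\ell^tg,h}_{\chi,\psi}=\ell\,\alpha^{\ell^{t-1}g,h}_{\chi,\psi},$$ and if $t=s$ (and $\ell^sg\neq N$ in case $H$ is cuspidal at zero), then $$(U_\ell-\chi^{-1}(\ell))\,\alpha^{\ell^sg,h}_{\chi,\psi}=(\ell-1)\,\alpha^{\ell^{s-1}g,h}_{\chi,\psi}.$$
   Context: $p$ is an odd prime, $M$ a positive integer with $p\nmid M\varphi(M)$, $N=Mp$, $\Delta=(\mathbb{Z}/N\mathbb{Z})^\times/\langle-1\rangle$. $H$ is either a space of level $N$ modular symbols — a $\mathbb{Z}_p[\Delta]$-module spanned by symbols $[u:v]$ ($u,v\in\mathbb{Z}/N\mathbb{Z}$ generating the unit ideal) with relations $[u:v]=[-u:-v]=-[-v:u]$, $[u:v]=[u:u+v]+[u+v:v]$, $\langle a\rangle[u:v]=[au:av]$ — or a space of level $N$ cuspidal-at-zero modular symbols, defined the same way but with symbols only for $u,v$ both nonzero and the second relation only for $u\neq-v$ (in that case symbols $[u:v]$ with $u=0$ or $v=0$ are interpreted as $0$). For a prime $\ell\mid N$, a $U_\ell$-operator is a $\mathbb{Z}_p[\Delta]$-linear endomorphism $U_\ell$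 of $H$ with $U_\ell[\ell u:v]=\sum_{k=0}^{\ell-1}[u+kN/\ell:v]$ for all $u,v\in\mathbb{Z}/N\mathbb{Z}$ with $(\ell u,v)=(1)$ (and $\ell u\neq0$ if $H$ is cuspidal at zero); it is extended $\mathcal{O}$-linearly. $\theta:\Delta\to\mathbb{C}_p^\times$ is a character, $\mathcal{O}=\mathbb{Z}_p[\mu_{\varphi(N)}]$, $X_N=\mathrm{Hom}((\mathbb{Z}/N\mathbb{Z})^\times,\mathcal{O}^\times)$, $f_\chi$ is the conductor of $\chi$, and $\chi(\ell)$ is the value of the associated primitive Dirichlet character. $e_\theta=\frac1{\varphi(N)}\sum_a\theta^{-1}(a)\langle a\rangle$, $H^\theta=e_\theta(H\otimes\mathcal{O})$, and for relatively prime divisors $g,h$ of $N$, $\alpha^{g,h}_{\chi,\psi}=\frac1{\varphi(N)^2}\sum_{a,b\in(\mathbb{Z}/N\mathbb{Z})^\times}\chi^{-1}(a)\psi^{-1}(b)[ga:hb]$. *)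

theory Defs
  imports "HOL-Computational_Algebra.Computational_Algebra" "HOL-Number_Theory.Number_Theory"
begin

text \<open>Coefficient ring: an abstract commutative ring 'r (standing in for O = Z_p[mu_phi(N)]).
  Residues mod N are represented by integers; everything is N-periodic.\<close>

definition ring_inv :: "'r::comm_ring_1 \<Rightarrow> 'r" where
  "ring_inv x = (SOME y. x * y = 1)"

definition unimod :: "nat \<Rightarrow> int \<Rightarrow> int \<Rightarrow> bool" where
  "unimod N u v \<longleftrightarrow> gcd (gcd u v) (int N) = 1"

definition units_mod :: "nat \<Rightarrow> int set" where
  "units_mod N = {a. 0 \<le> a \<and> a < int N \<and> coprime a (int N)}"

definition dchar :: "nat \<Rightarrow> (int \<Rightarrow> 'r::comm_ring_1) \<Rightarrow> bool" where
  "dchar N \<chi> \<longleftrightarrow> (\<forall>a. \<chi> a = \<chi> (a mod int N)) \<and> \<chi> 1 = 1 \<and>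
     (\<forall>a b. coprime a (int N) \<longrightarrow> coprime b (int N) \<longrightarrow> \<chi> (a * b) = \<chi> a * \<chi> b) \<and>
     (\<forall>a. \<not> coprime a (int N) \<longrightarrow> \<chi> a = 0)"

definition cinv :: "nat \<Rightarrow> (int \<Rightarrow> 'r::comm_ring_1) \<Rightarrow> int \<Rightarrow> 'r" where
  "cinv N \<chi> a = (if coprime a (int N) then ring_inv (\<chi> a) else 0)"

definition conductor :: "nat \<Rightarrow> (int \<Rightarrow> 'r::comm_ring_1) \<Rightarrow> nat" where
  "conductor N \<chi> = (LEAST d. 0 < d \<and> d dvd N \<and>
      (\<forall>a. coprime a (int N) \<longrightarrow> [a = 1] (mod int d) \<longrightarrow> \<chi> a = 1))"

text \<open>Value at l of the primitive Dirichlet character associated to chi.\<close>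
definition prim_val :: "nat \<Rightarrow> (int \<Rightarrow> 'r::comm_ring_1) \<Rightarrow> nat \<Rightarrow> 'r" where
  "prim_val N \<chi> l = (let f = conductor N \<chi> in
     if coprime (int l) (int f)
     then \<chi> (SOME a. coprime a (int N) \<and> [a = int l] (mod int f))
     else 0)"

text \<open>A (cuspidal-at-zero if cusp) level N modular symbol space, already tensored with 'r:
  an 'r-module spanned by symbols symb u v satisfying the defining relations, with the
  diamond action dia.\<close>
definition modsym_space :: "nat \<Rightarrow> bool \<Rightarrow> ('r::comm_ring_1 \<Rightarrow> 'h::ab_group_add \<Rightarrow> 'h)
    \<Rightarrow> (int \<Rightarrow> int \<Rightarrow> 'h) \<Rightarrow> (int \<Rightarrow> 'h \<Rightarrow> 'h) \<Rightarrow> bool" where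
  "modsym_space N cusp scale symb dia \<longleftrightarrow>
     Modules.module scale \<and>
     Modules.module.span scale {symb u v | u v. unimod N u v} = UNIV \<and>
     (\<forall>u v. symb u v = symb (u mod int N) (v mod int N)) \<and>
     (cusp \<longrightarrow> (\<forall>u v. (u mod int N = 0 \<or> v mod int N = 0) \<longrightarrow> symb u v = 0)) \<and>
     (\<forall>u v. unimod N u v \<longrightarrow> symb u v = symb (-u) (-v) \<and> symb u v = - symb (-v) u) \<and>
     (\<forall>u v. unimod N u v \<longrightarrow>
        (cusp \<longrightarrow> u mod int N \<noteq> 0 \<and> v mod int N \<noteq> 0 \<and> (u + v) mod int N \<noteq> 0) \<longrightarrow>
        symb u v = symb u (u + v) + symb (u + v) v) \<and>
     (\<forall>a. coprime a (int N) \<longrightarrow> Modules.module_hom scale scale (dia a) \<and>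
        (\<forall>u v. unimod N u v \<longrightarrow> dia a (symb u v) = symb (a * u) (a * v)))"

definition U_op :: "nat \<Rightarrow> bool \<Rightarrow> ('r::comm_ring_1 \<Rightarrow> 'h::ab_group_add \<Rightarrow> 'h)
    \<Rightarrow> (int \<Rightarrow> int \<Rightarrow> 'h) \<Rightarrow> (int \<Rightarrow> 'h \<Rightarrow> 'h) \<Rightarrow> nat \<Rightarrow> ('h \<Rightarrow> 'h) \<Rightarrow> bool" where
  "U_op N cusp scale symb dia l U \<longleftrightarrow>
     Modules.module_hom scale scale U \<and>
     (\<forall>a x. coprime a (int N) \<longrightarrow> U (dia a x) = dia a (U x)) \<and>
     (\<forall>u v. unimod N (int l * u) v \<longrightarrow> (cusp \<longrightarrow> (int l * u) mod int N \<noteq> 0) \<longrightarrow>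
        U (symb (int l * u) v) = (\<Sum>k<l. symb (u + int k * int (N div l)) v))"

definition alpha :: "nat \<Rightarrow> ('r::comm_ring_1 \<Rightarrow> 'h::ab_group_add \<Rightarrow> 'h) \<Rightarrow> (int \<Rightarrow> int \<Rightarrow> 'h)
    \<Rightarrow> (int \<Rightarrow> 'r) \<Rightarrow> (int \<Rightarrow> 'r) \<Rightarrow> nat \<Rightarrow> nat \<Rightarrow> 'h" where
  "alpha N scale symb \<chi> \<psi> g h =
     scale (ring_inv ((of_nat (totient N))^2))
       (\<Sum>a\<in>units_mod N. \<Sum>b\<in>units_mod N.
          scale (cinv N \<chi> a * cinv N \<psi> b) (symb (int g * a) (int h * b)))"

end

theory Submission
  imports Defs
begin

text \<open>Write $\alpha^{\ell^t g,h}$ as a $\chi^{-1}$-twisted sum over the units $a$ modulo $N$ of the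
  partial sums $W(\ell a)$, where $W(x) = \sum_b \psi^{-1}(b)\,[\ell^{t-1} g x : h b]$. Since $g$ is
  invertible modulo $\ell$, $U_\ell$ maps $W(\ell a)$ to $\sum_{k<\ell} W(a + k D w)$, where $D = N/\ell^t$
  and $g w \equiv 1 \pmod \ell$.

  If $t < s$, then $\ell \mid D$, so every translate $a + k D w$ is again a unit, congruent to $a$
  modulo $D$ and hence modulo $f_\chi$; reindexing gives $\ell$ copies of $\alpha^{\ell^{t-1} g,h}$.

  If $t = s$, then $D$ is prime to $\ell$ and exactly one translate is divisible by $\ell$. The other
  $\ell - 1$ translates reindex as before, while the exceptional one is congruent to $\ell \cdot a/d$
  modulo $\ell D$ for a unit $d \equiv \ell \pmod D$; the substitution $a \mapsto a/d$ turns these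
  terms into $\chi^{-1}(\ell)\,\alpha^{\ell^s g,h}$.\<close>

section \<open>Congruence arithmetic\<close>

lemma cong_inverse_exists:
  fixes a n :: int
  assumes "coprime a n"
  obtains a' where "[a * a' = 1] (mod n)" "coprime a' n"
proof -
  obtain a' where "[a * a' = 1] (mod n)" using cong_solve_coprime_int[OF assms] by blast
  moreover from this have "coprime a' n"
    by (metis coprime_iff_invertible_int mult.commute cong_sym)
  ultimately show thesis by (rule that)
qed

lemma cong_inverse_mod_prime:
  assumes "prime l" "\<not> l dvd g"
  obtains w where "[int g * w = 1] (mod int l)" "coprime w (int l)"
proof -
  have "coprime (int g) (int l)" using prime_imp_coprime[OF assms] by (simp add: coprime_commute)
  then show thesis using cong_inverse_exists that by blast
qed

lemma coprime_add_iff_if_dvd: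
  fixes D e x :: int
  assumes "D dvd e"
  shows "coprime (x + e) D \<longleftrightarrow> coprime x D"
  by (rule coprime_cong_cong_left) (use assms in \<open>simp add: cong_iff_dvd_diff\<close>)

lemma coprime_prime_right_iff:
  fixes p x :: int
  assumes "prime p"
  shows "coprime x p \<longleftrightarrow> \<not> p dvd x"
  using assms by (meson coprime_commute prime_imp_coprime coprime_common_divisor dvd_refl not_prime_unit)

lemma card_dvd_add_mult_eq_1:
  fixes x c :: int
  assumes "prime l" "coprime c (int l)"
  shows "card {k \<in> {..<l}. int l dvd x + int k * c} = 1"
proof -
  have l_pos: "int l > 0" using assms(1) prime_gt_0_nat by simp
  obtain c' where "[c * c' = 1] (mod int l)" using cong_solve_coprime_int[OF assms(2)] by blast
  then have "coprime (int l) c'"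
    by (metis coprime_iff_invertible_int mult.commute coprime_commute)
  from \<open>[c * c' = 1] (mod int l)\<close> obtain q where c': "c * c' = 1 + int l * q"
    by (metis cong_iff_dvd_diff dvd_def eq_diff_eq add.commute)
  define k0 where "k0 = nat ((- x * c') mod int l)"
  have "int l dvd x + int k * c \<longleftrightarrow> k = k0" if "k < l" for k
  proof -
    have "int l dvd x + int k * c \<longleftrightarrow> int l dvd (x + int k * c) * c'"
      using \<open>coprime (int l) c'\<close> by (simp add: coprime_dvd_mult_left_iff)
    also have "(x + int k * c) * c' = x * c' + int k * (c * c')" by (simp add: algebra_simps)
    also have "\<dots> = (int k - (- x * c')) + int l * (int k * q)" unfolding c' by (simp add: algebra_simps)
    also have "int l dvd \<dots> \<longleftrightarrow> int l dvd int k - (- x * c')"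
      by (metis dvd_add_times_triv_right_iff mult.commute)
    also have "\<dots> \<longleftrightarrow> int k mod int l = (- x * c') mod int l"
      by (simp add: mod_eq_dvd_iff)
    also have "\<dots> \<longleftrightarrow> k = k0"
      using that l_pos unfolding k0_def by (auto simp: nat_eq_iff)
    finally show ?thesis .
  qed
  moreover have "k0 < l" unfolding k0_def using l_pos by (simp add: nat_less_iff)
  ultimately have "{k \<in> {..<l}. int l dvd x + int k * c} = {k0}" by auto
  then show ?thesis by simp
qed

section \<open>Dirichlet characters\<close>

lemma ring_inv_eqI:
  fixes x y :: "'r::comm_ring_1"
  assumes "x * y = 1"
  shows "ring_inv x = y"
proof -
  have "x * ring_inv x = 1" unfolding ring_inv_def by (rule someI[of _ y]) (rule assms)
  then have "y * (x * ring_inv x) = y" by simp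
  then show ?thesis using assms by (simp add: mult.assoc[symmetric] mult.commute)
qed

lemma dchar_cong:
  assumes "dchar N \<chi>" "[a = b] (mod int N)"
  shows "\<chi> a = \<chi> b"
  using assms unfolding dchar_def cong_def by metis

lemma dchar_one:
  assumes "dchar N \<chi>"
  shows "\<chi> 1 = 1"
  using assms unfolding dchar_def by blast

lemma dchar_mult:
  assumes "dchar N \<chi>" "coprime a (int N)" "coprime b (int N)"
  shows "\<chi> (a * b) = \<chi> a * \<chi> b"
  using assms unfolding dchar_def by blast

lemma dchar_mult_cinv:
  assumes "dchar N \<chi>" "coprime a (int N)"
  shows "\<chi> a * cinv N \<chi> a = 1"
proof -
  obtain a' where a': "[a * a' = 1] (mod int N)" "coprime a' (int N)"
    using cong_inverse_exists assms(2) by blast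
  have "\<chi> a * \<chi> a' = \<chi> (a * a')" using dchar_mult assms a'(2) by metis
  also have "\<dots> = 1" using dchar_cong[OF assms(1) a'(1)] dchar_one[OF assms(1)] by simp
  finally show ?thesis using ring_inv_eqI assms(2) unfolding cinv_def by metis
qed

lemma cinv_mult:
  assumes "dchar N \<chi>" "coprime a (int N)" "coprime b (int N)"
  shows "cinv N \<chi> (a * b) = cinv N \<chi> a * cinv N \<chi> b"
proof -
  have "\<chi> (a * b) * (cinv N \<chi> a * cinv N \<chi> b) = (\<chi> a * cinv N \<chi> a) * (\<chi> b * cinv N \<chi> b)"
    using dchar_mult[OF assms] by (simp add: ac_simps)
  also have "\<dots> = 1" using dchar_mult_cinv[OF assms(1,2)] dchar_mult_cinv[OF assms(1,3)] by simp
  finally show ?thesis using ring_inv_eqI assms unfolding cinv_def by simp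
qed

lemma dchar_cinv:
  assumes "dchar N \<chi>"
  shows "dchar N (cinv N \<chi>)"
  unfolding dchar_def
proof (intro conjI allI impI)
  fix a
  show "cinv N \<chi> a = cinv N \<chi> (a mod int N)"
  proof -
    have a: "[a mod int N = a] (mod int N)" by (simp add: cong_def)
    show ?thesis
      using coprime_cong_cong_left[OF a] dchar_cong[OF assms a] unfolding cinv_def by simp
  qed
next
  show "cinv N \<chi> 1 = 1" using dchar_one[OF assms] ring_inv_eqI[of 1 1] unfolding cinv_def by simp
next
  fix a b assume "coprime a (int N)" "coprime b (int N)"
  then show "cinv N \<chi> (a * b) = cinv N \<chi> a * cinv N \<chi> b" by (rule cinv_mult[OF assms])
next
  fix a assume "\<not> coprime a (int N)"
  then show "cinv N \<chi> a = 0" unfolding cinv_def by simp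
qed

lemma conductor_cinv:
  assumes "dchar N \<chi>"
  shows "conductor N (cinv N \<chi>) = conductor N \<chi>"
proof -
  have "cinv N \<chi> a = 1 \<longleftrightarrow> \<chi> a = 1" if "coprime a (int N)" for a
    using dchar_mult_cinv[OF assms that] by (metis mult_1_left mult_1_right)
  then show ?thesis unfolding conductor_def by (metis (no_types, lifting))
qed

lemma conductor_dvd_and_trivial:
  assumes "dchar N \<chi>" "N > 0"
  shows "conductor N \<chi> dvd N \<and>
      (\<forall>a. coprime a (int N) \<longrightarrow> [a = 1] (mod int (conductor N \<chi>)) \<longrightarrow> \<chi> a = 1)"
proof -
  have "\<exists>d. 0 < d \<and> d dvd N \<and> (\<forall>a. coprime a (int N) \<longrightarrow> [a = 1] (mod int d) \<longrightarrow> \<chi> a = 1)"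
  proof (intro exI[of _ N] conjI allI impI)
    fix a assume "[a = 1] (mod int N)"
    then show "\<chi> a = 1" using dchar_cong[OF assms(1)] dchar_one[OF assms(1)] by metis
  qed (use assms(2) in auto)
  from LeastI_ex[OF this] show ?thesis unfolding conductor_def by blast
qed

lemma dchar_eq_if_cong_conductor:
  assumes "dchar N \<chi>" "N > 0" "coprime a (int N)" "coprime b (int N)"
    and "[a = b] (mod int (conductor N \<chi>))"
  shows "\<chi> a = \<chi> b"
proof -
  note f = conductor_dvd_and_trivial[OF assms(1,2)]
  obtain a' where a': "[a * a' = 1] (mod int N)" "coprime a' (int N)"
    using cong_inverse_exists assms(3) by blast
  have "[b * a' = a * a'] (mod int (conductor N \<chi>))"
    using assms(5) by (simp add: cong_scalar_right cong_sym)
  also have "[a * a' = 1] (mod int (conductor N \<chi>))"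
    using a'(1) f by (meson cong_dvd_modulus int_dvd_int_iff)
  finally have "\<chi> (b * a') = 1" using f assms(4) a'(2) by simp
  then have "\<chi> (b * a' * a) = \<chi> a" using dchar_mult assms a'(2) by (metis coprime_mult_left_iff mult_1)
  moreover have "[b * a' * a = b] (mod int N)"
    using cong_scalar_left[OF a'(1), of b] by (simp add: ac_simps)
  ultimately show ?thesis using dchar_cong[OF assms(1)] by metis
qed

lemma prim_val_eq:
  assumes "dchar N \<chi>" "N > 0" "coprime d (int N)" "[d = int l] (mod int (conductor N \<chi>))"
  shows "prim_val N \<chi> l = \<chi> d"
proof -
  let ?f = "int (conductor N \<chi>)"
  have "?f dvd int N" using conductor_dvd_and_trivial[OF assms(1,2)] by simp
  then have "coprime d ?f" using assms(3) by (meson coprime_divisors dvd_refl)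
  then have "coprime (int l) ?f" using coprime_cong_cong_left[OF assms(4)] by simp
  moreover have ex: "\<exists>a. coprime a (int N) \<and> [a = int l] (mod ?f)" using assms(3,4) by blast
  define a0 where "a0 = (SOME a. coprime a (int N) \<and> [a = int l] (mod ?f))"
  have a0: "coprime a0 (int N)" "[a0 = int l] (mod ?f)"
    using someI_ex[OF ex] unfolding a0_def by blast+
  ultimately have "prim_val N \<chi> l = \<chi> a0" unfolding prim_val_def Let_def a0_def by simp
  also have "\<dots> = \<chi> d"
    using dchar_eq_if_cong_conductor[OF assms(1,2) a0(1) assms(3)] a0(2) assms(4)
    by (metis cong_sym cong_trans)
  finally show ?thesis .
qed

section \<open>Twisted sums over the units modulo \<open>N\<close>\<close>

definition twisted_sum :: "nat \<Rightarrow> ('r \<Rightarrow> 'h \<Rightarrow> 'h) \<Rightarrow> (int \<Rightarrow> 'r) \<Rightarrow> (int \<Rightarrow> 'h) \<Rightarrow> 'h::comm_monoid_add"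
  where "twisted_sum N scale C W = (\<Sum>a\<in>units_mod N. scale (C a) (W a))"

lemma finite_units_mod [simp]: "finite (units_mod N)"
  unfolding units_mod_def by (rule finite_subset[of _ "{0..<int N}"]) auto

lemma mod_in_units_mod_iff:
  assumes "N > 0"
  shows "x mod int N \<in> units_mod N \<longleftrightarrow> coprime x (int N)"
  using assms coprime_mod_left_iff[of "int N" x] unfolding units_mod_def by simp

lemma coprime_if_in_units_mod: "a \<in> units_mod N \<Longrightarrow> coprime a (int N)"
  unfolding units_mod_def by simp

lemma sum_filter_split:
  assumes "finite A"
  shows "sum f A = sum f {x \<in> A. P x} + sum f {x \<in> A. \<not> P x}"
  using sum.If_cases[OF assms, of P f f] by (simp add: Int_def Compl_eq)

lemma sum_units_mod_shift:
  fixes D e :: int and f :: "'r::comm_ring_1 \<Rightarrow> int \<Rightarrow> 'a::comm_monoid_add"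
  assumes "N > 0" "dchar N C" "int (conductor N C) dvd D" "D dvd int N" "D dvd e"
  shows "(\<Sum>a | a \<in> units_mod N \<and> coprime (a + e) (int N). f (C a) ((a + e) mod int N))
       = (\<Sum>x | x \<in> units_mod N \<and> coprime (x - e) (int N). f (C x) x)"
proof (rule sum.reindex_bij_witness[where j = "\<lambda>a. (a + e) mod int N" and i = "\<lambda>x. (x - e) mod int N"])
  fix a assume "a \<in> {a. a \<in> units_mod N \<and> coprime (a + e) (int N)}"
  then have a: "a \<in> units_mod N" "coprime (a + e) (int N)" by auto
  show "((a + e) mod int N - e) mod int N = a"
    using a(1) by (simp add: units_mod_def mod_diff_left_eq)
  then show "(a + e) mod int N \<in> {x. x \<in> units_mod N \<and> coprime (x - e) (int N)}"
    using a coprime_if_in_units_mod[OF a(1)] coprime_mod_left_iff[of "int N" "(a + e) mod int N - e"]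
      assms(1) by (simp add: mod_in_units_mod_iff)
  have "[(a + e) mod int N = a] (mod D)"
  proof -
    have "[(a + e) mod int N = a + e] (mod int N)" by (simp add: cong_def)
    then have "[(a + e) mod int N = a + e] (mod D)" using assms(4) by (rule cong_dvd_modulus)
    also have "[a + e = a] (mod D)" using assms(5) by (simp add: cong_iff_dvd_diff)
    finally show ?thesis .
  qed
  moreover have "coprime ((a + e) mod int N) (int N)"
    using a(2) assms(1) by (simp add: coprime_mod_left_iff)
  ultimately have "C ((a + e) mod int N) = C a"
    using dchar_eq_if_cong_conductor[OF assms(2,1) _ coprime_if_in_units_mod[OF a(1)]]
      cong_dvd_modulus[OF _ assms(3)] by blast
  then show "f (C ((a + e) mod int N)) ((a + e) mod int N) = f (C a) ((a + e) mod int N)" by simp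
next
  fix x assume "x \<in> {x. x \<in> units_mod N \<and> coprime (x - e) (int N)}"
  then have x: "x \<in> units_mod N" "coprime (x - e) (int N)" by auto
  show "((x - e) mod int N + e) mod int N = x"
    using x(1) by (simp add: units_mod_def mod_add_left_eq)
  then show "(x - e) mod int N \<in> {a. a \<in> units_mod N \<and> coprime (a + e) (int N)}"
    using x coprime_if_in_units_mod[OF x(1)] coprime_mod_left_iff[of "int N" "(x - e) mod int N + e"]
      assms(1) by (simp add: mod_in_units_mod_iff)
qed

lemma twisted_sum_shift_sum:
  fixes scale :: "'r::comm_ring_1 \<Rightarrow> 'h::ab_group_add \<Rightarrow> 'h" and D c :: int
  assumes "Modules.module scale" "N > 0" "dchar N C" "int (conductor N C) dvd D" "D dvd int N"
    and "D dvd c" "\<And>x. coprime x D \<Longrightarrow> coprime x (int N)"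
  shows "twisted_sum N scale C (\<lambda>a. \<Sum>k<l. W ((a + int k * c) mod int N))
       = scale (of_nat l) (twisted_sum N scale C W)"
proof -
  interpret m: Modules.module scale by fact
  have coprime_shift: "coprime (x + e) (int N) \<longleftrightarrow> coprime x (int N)" if "D dvd e" for x e
    using coprime_add_iff_if_dvd[OF that] assms(5,7) by (meson coprime_divisors dvd_refl)
  have "twisted_sum N scale C (\<lambda>a. \<Sum>k<l. W ((a + int k * c) mod int N))
      = (\<Sum>k<l. \<Sum>a\<in>units_mod N. scale (C a) (W ((a + int k * c) mod int N)))"
    unfolding twisted_sum_def m.scale_sum_right by (rule sum.swap)
  also have "\<dots> = (\<Sum>k<l. twisted_sum N scale C W)"
  proof (rule sum.cong[OF refl])
    fix k
    have "D dvd int k * c" "D dvd - (int k * c)" using assms(6) by simp_all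
    from this[THEN coprime_shift] have
      "{a \<in> units_mod N. coprime (a + int k * c) (int N)} = units_mod N"
      "{x \<in> units_mod N. coprime (x - int k * c) (int N)} = units_mod N"
      using coprime_if_in_units_mod by auto
    then show "(\<Sum>a\<in>units_mod N. scale (C a) (W ((a + int k * c) mod int N))) = twisted_sum N scale C W"
      using sum_units_mod_shift[OF assms(2-5), of "int k * c" "\<lambda>r x. scale r (W x)"] assms(6)
      unfolding twisted_sum_def by simp
  qed
  also have "\<dots> = scale (of_nat l) (twisted_sum N scale C W)"
    by (simp add: m.sum_constant_scale)
  finally show ?thesis .
qed

lemma card_coprime_diff_mult_eq:
  fixes x c D :: int
  assumes "prime l" "coprime c (int l)" "D dvd c" "coprime x D"
    and "\<And>y. coprime y (int N) \<longleftrightarrow> coprime y (int l) \<and> coprime y D"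
  shows "card {k \<in> {..<l}. coprime (x - int k * c) (int N)} = l - 1"
proof -
  have "coprime (x - int k * c) (int N) \<longleftrightarrow> \<not> int l dvd x + int k * (- c)" for k
  proof -
    have "coprime (x - int k * c) D"
      using coprime_add_iff_if_dvd[of D "- (int k * c)" x] assms(3,4) by simp
    then show ?thesis
      using assms(5) coprime_prime_right_iff[of "int l" "x - int k * c"] assms(1) by simp
  qed
  then have "{k \<in> {..<l}. coprime (x - int k * c) (int N)}
      = {..<l} - {k \<in> {..<l}. int l dvd x + int k * (- c)}"
    by auto
  moreover have "card {k \<in> {..<l}. int l dvd x + int k * (- c)} = 1"
    using card_dvd_add_mult_eq_1[of l "- c" x] assms(1,2) by simp
  ultimately show ?thesis
    using card_Diff_subset[of "{k \<in> {..<l}. int l dvd x + int k * (- c)}" "{..<l}"] by auto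
qed

lemma twisted_sum_shift_sum_unit_shifts:
  fixes scale :: "'r::comm_ring_1 \<Rightarrow> 'h::ab_group_add \<Rightarrow> 'h" and D c :: int
  assumes "Modules.module scale" "N > 0" "prime l" "dchar N C" "int (conductor N C) dvd D"
    and "D dvd int N" "D dvd c" "coprime c (int l)"
    and "\<And>x. coprime x (int N) \<longleftrightarrow> coprime x (int l) \<and> coprime x D"
  shows "twisted_sum N scale C
           (\<lambda>a. \<Sum>k\<in>{k \<in> {..<l}. coprime (a + int k * c) (int N)}. W ((a + int k * c) mod int N))
       = scale (of_nat l - 1) (twisted_sum N scale C W)"
proof -
  interpret m: Modules.module scale by fact
  let ?U = "units_mod N"
  have "twisted_sum N scale C
           (\<lambda>a. \<Sum>k\<in>{k \<in> {..<l}. coprime (a + int k * c) (int N)}. W ((a + int k * c) mod int N))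
      = (\<Sum>k<l. \<Sum>a\<in>{a \<in> ?U. coprime (a + int k * c) (int N)}.
           scale (C a) (W ((a + int k * c) mod int N)))"
    unfolding twisted_sum_def m.scale_sum_right by (rule sum.swap_restrict) simp_all
  also have "\<dots> = (\<Sum>k<l. \<Sum>x\<in>{x \<in> ?U. coprime (x - int k * c) (int N)}. scale (C x) (W x))"
    using sum_units_mod_shift[OF assms(2,4,5,6), where f = "\<lambda>r x. scale r (W x)"] assms(7) by simp
  also have "\<dots> = (\<Sum>x\<in>?U. \<Sum>k\<in>{k \<in> {..<l}. coprime (x - int k * c) (int N)}. scale (C x) (W x))"
    by (rule sum.swap_restrict[symmetric]) simp_all
  also have "\<dots> = (\<Sum>x\<in>?U. scale (of_nat (l - 1)) (scale (C x) (W x)))"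
  proof (rule sum.cong[OF refl])
    fix x assume "x \<in> ?U"
    then have "coprime x D" using assms(9) coprime_if_in_units_mod by blast
    then show "(\<Sum>k\<in>{k \<in> {..<l}. coprime (x - int k * c) (int N)}. scale (C x) (W x))
        = scale (of_nat (l - 1)) (scale (C x) (W x))"
      using card_coprime_diff_mult_eq[OF assms(3,8,7) _ assms(9)] by (simp add: m.sum_constant_scale)
  qed
  also have "\<dots> = scale (of_nat l - 1) (twisted_sum N scale C W)"
    using prime_ge_1_nat[OF assms(3)] unfolding twisted_sum_def m.scale_sum_right by (simp add: of_nat_diff)
  finally show ?thesis .
qed

lemma twisted_sum_mult:
  fixes scale :: "'r::comm_ring_1 \<Rightarrow> 'h::ab_group_add \<Rightarrow> 'h" and d d' :: int
  assumes "Modules.module scale" "N > 0" "dchar N C" "coprime d (int N)" "[d * d' = 1] (mod int N)"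
  shows "twisted_sum N scale C (\<lambda>a. V ((a * d') mod int N)) = scale (C d) (twisted_sum N scale C V)"
proof -
  interpret m: Modules.module scale by fact
  have "coprime d' (int N)"
    using assms(5) by (metis coprime_iff_invertible_int mult.commute cong_sym)
  have cancel: "[(y * e) mod int N * e' = y] (mod int N)" if "[e' * e = 1] (mod int N)" for y e e'
  proof -
    have "[(y * e) mod int N * e' = y * (e' * e)] (mod int N)"
      by (metis cong_mod_left cong_refl cong_scalar_right mult.assoc mult.commute)
    also have "[y * (e' * e) = y * 1] (mod int N)" using that by (rule cong_scalar_left)
    finally show ?thesis by simp
  qed
  have "[d' * d = 1] (mod int N)" using assms(5) by (simp add: mult.commute)
  note cancel_d = cancel[OF assms(5)] and cancel_d' = cancel[OF this]
  have in_units: "(y * e) mod int N \<in> units_mod N" if "y \<in> units_mod N" "coprime e (int N)" for y e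
    using that assms(2) by (simp add: mod_in_units_mod_iff coprime_if_in_units_mod)
  have "twisted_sum N scale C (\<lambda>a. V ((a * d') mod int N))
      = (\<Sum>y\<in>units_mod N. scale (C d) (scale (C y) (V y)))"
    unfolding twisted_sum_def
  proof (rule sum.reindex_bij_witness[where j = "\<lambda>a. (a * d') mod int N" and i = "\<lambda>y. (y * d) mod int N"])
    fix a assume a: "a \<in> units_mod N"
    then show "((a * d') mod int N * d) mod int N = a"
      using cancel_d[of a] unfolding cong_def by (simp add: units_mod_def)
    show "(a * d') mod int N \<in> units_mod N" using in_units a \<open>coprime d' (int N)\<close> by blast
    then have "C d * C ((a * d') mod int N) = C ((a * d') mod int N * d)"
      using dchar_mult[OF assms(3) _ assms(4)] coprime_if_in_units_mod by (metis mult.commute)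
    also have "\<dots> = C a" using dchar_cong[OF assms(3) cancel_d] .
    finally show "scale (C d) (scale (C ((a * d') mod int N)) (V ((a * d') mod int N)))
        = scale (C a) (V ((a * d') mod int N))" by simp
  next
    fix y assume y: "y \<in> units_mod N"
    then show "((y * d) mod int N * d') mod int N = y"
      using cancel_d'[of y] unfolding cong_def by (simp add: units_mod_def)
    show "(y * d) mod int N \<in> units_mod N" using in_units y assms(4) by blast
  qed
  then show ?thesis unfolding twisted_sum_def m.scale_sum_right .
qed

lemma sum_nonunit_shift_eq:
  fixes D c d d' a :: int
  assumes "prime l" "\<And>x. coprime x (int N) \<longleftrightarrow> coprime x (int l) \<and> coprime x D"
    and "int l * D dvd int N" "coprime (int l) D" "D dvd c" "coprime c (int l)"
    and "[d = int l] (mod D)" "[d * d' = 1] (mod int N)" "a \<in> units_mod N"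
    and "\<And>x y. [x = y] (mod int l * D) \<Longrightarrow> W x = W y"
  shows "(\<Sum>k\<in>{k \<in> {..<l}. \<not> coprime (a + int k * c) (int N)}. W ((a + int k * c) mod int N))
       = W (int l * ((a * d') mod int N))"
proof -
  have "D dvd int N" using assms(3) by (rule dvd_mult_right)
  have "int l dvd int N" using assms(3) by (rule dvd_mult_left)
  have mod_N: "[y mod int N = y] (mod D)" "[y mod int N = y] (mod int l)" for y
    using \<open>D dvd int N\<close> \<open>int l dvd int N\<close> by (simp_all add: cong_def mod_mod_cancel)
  have "coprime a D" using assms(2,9) coprime_if_in_units_mod by blast
  then have "\<not> coprime (a + int k * c) (int N) \<longleftrightarrow> int l dvd a + int k * c" for k
    using coprime_add_iff_if_dvd[of D "int k * c" a] assms(1,2,5)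
      coprime_prime_right_iff[of "int l" "a + int k * c"] by simp
  then have "{k \<in> {..<l}. \<not> coprime (a + int k * c) (int N)} = {k \<in> {..<l}. int l dvd a + int k * c}"
    by auto
  moreover obtain k0 where "{k \<in> {..<l}. int l dvd a + int k * c} = {k0}"
    using card_dvd_add_mult_eq_1[OF assms(1,6), of a] by (rule card_1_singletonE)
  ultimately have k0: "{k \<in> {..<l}. \<not> coprime (a + int k * c) (int N)} = {k0}"
    "int l dvd a + int k0 * c" by auto
  have "[(a + int k0 * c) mod int N = int l * ((a * d') mod int N)] (mod int l * D)"
  proof (rule coprime_cong_mult[OF _ _ assms(4)])
    have "[a + int k0 * c = 0] (mod int l)" "[0 = int l * ((a * d') mod int N)] (mod int l)"
      using k0(2) by (simp_all add: cong_0_iff cong_sym_eq[of 0])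
    then show "[(a + int k0 * c) mod int N = int l * ((a * d') mod int N)] (mod int l)"
      using mod_N(2) cong_trans by blast
    have "[a + int k0 * c = a] (mod D)" using assms(5) by (simp add: cong_iff_dvd_diff)
    with mod_N(1) have "[(a + int k0 * c) mod int N = a] (mod D)" by (rule cong_trans)
    moreover have "[int l * ((a * d') mod int N) = a] (mod D)"
    proof -
      have "[int l * ((a * d') mod int N) = d * (a * d')] (mod D)"
        using cong_mult[OF cong_sym[OF assms(7)] mod_N(1)] .
      also have "d * (a * d') = a * (d * d')" by (simp add: ac_simps)
      also have "[a * (d * d') = a * 1] (mod D)"
        using cong_scalar_left[OF cong_dvd_modulus[OF assms(8) \<open>D dvd int N\<close>]] .
      finally show ?thesis by simp
    qed
    ultimately show "[(a + int k0 * c) mod int N = int l * ((a * d') mod int N)] (mod D)"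
      using cong_sym cong_trans by blast
  qed
  then show ?thesis using k0(1) assms(10) by simp
qed

lemma twisted_sum_shift_sum_split:
  fixes scale :: "'r::comm_ring_1 \<Rightarrow> 'h::ab_group_add \<Rightarrow> 'h" and D c d :: int
  assumes "Modules.module scale" "N > 0" "prime l" "dchar N C" "int (conductor N C) dvd D"
    and "\<And>x. coprime x (int N) \<longleftrightarrow> coprime x (int l) \<and> coprime x D"
    and "int l * D dvd int N" "coprime (int l) D" "D dvd c" "coprime c (int l)"
    and "coprime d (int N)" "[d = int l] (mod D)"
    and "\<And>x y. [x = y] (mod int l * D) \<Longrightarrow> W x = W y"
  shows "twisted_sum N scale C (\<lambda>a. \<Sum>k<l. W ((a + int k * c) mod int N))
       = scale (of_nat l - 1) (twisted_sum N scale C W)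
         + scale (C d) (twisted_sum N scale C (\<lambda>y. W (int l * y)))"
proof -
  interpret m: Modules.module scale by fact
  obtain d' where d': "[d * d' = 1] (mod int N)" using cong_inverse_exists[OF assms(11)] by blast
  have "D dvd int N" using assms(7) by (rule dvd_mult_right)
  have "twisted_sum N scale C (\<lambda>a. \<Sum>k<l. W ((a + int k * c) mod int N))
      = twisted_sum N scale C
          (\<lambda>a. \<Sum>k\<in>{k \<in> {..<l}. coprime (a + int k * c) (int N)}. W ((a + int k * c) mod int N))
        + twisted_sum N scale C
          (\<lambda>a. \<Sum>k\<in>{k \<in> {..<l}. \<not> coprime (a + int k * c) (int N)}. W ((a + int k * c) mod int N))"
    unfolding twisted_sum_def sum.distrib[symmetric] m.scale_right_distrib[symmetric]
    by (intro sum.cong refl arg_cong[where f = "scale _"] sum_filter_split) simp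
  also have "\<dots> = scale (of_nat l - 1) (twisted_sum N scale C W)
      + twisted_sum N scale C (\<lambda>a. W (int l * ((a * d') mod int N)))"
  proof -
    have "twisted_sum N scale C
          (\<lambda>a. \<Sum>k\<in>{k \<in> {..<l}. \<not> coprime (a + int k * c) (int N)}. W ((a + int k * c) mod int N))
        = twisted_sum N scale C (\<lambda>a. W (int l * ((a * d') mod int N)))"
      unfolding twisted_sum_def
      by (intro sum.cong refl arg_cong[where f = "scale _"]
          sum_nonunit_shift_eq[OF assms(3,6-10) assms(12) d' _ assms(13)])
    then show ?thesis
      using twisted_sum_shift_sum_unit_shifts[OF assms(1-5) \<open>D dvd int N\<close> assms(9,10,6), where W = W] by simp
  qed
  also have "twisted_sum N scale C (\<lambda>a. W (int l * ((a * d') mod int N)))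
      = scale (C d) (twisted_sum N scale C (\<lambda>y. W (int l * y)))"
    by (rule twisted_sum_mult[OF assms(1,2,4,11) d'])
  finally show ?thesis .
qed

section \<open>Modular symbols and \<open>U\<^sub>\<ell>\<close>\<close>

definition alpha_inner :: "nat \<Rightarrow> ('r::comm_ring_1 \<Rightarrow> 'h::ab_group_add \<Rightarrow> 'h) \<Rightarrow> (int \<Rightarrow> int \<Rightarrow> 'h)
    \<Rightarrow> (int \<Rightarrow> 'r) \<Rightarrow> nat \<Rightarrow> nat \<Rightarrow> int \<Rightarrow> 'h" where
  "alpha_inner N scale symb \<psi> g h x =
     (\<Sum>b\<in>units_mod N. scale (cinv N \<psi> b) (symb (int g * x) (int h * b)))"

lemma alpha_eq_twisted_sum:
  assumes "Modules.module scale"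
  shows "alpha N scale symb \<chi> \<psi> g h = scale (ring_inv ((of_nat (totient N))^2))
           (twisted_sum N scale (cinv N \<chi>) (alpha_inner N scale symb \<psi> g h))"
proof -
  interpret m: Modules.module scale by fact
  show ?thesis unfolding alpha_def twisted_sum_def alpha_inner_def
    by (simp add: m.scale_sum_right)
qed

lemma alpha_inner_mult:
  "alpha_inner N scale symb \<psi> (l * g) h x = alpha_inner N scale symb \<psi> g h (int l * x)"
  unfolding alpha_inner_def by (simp add: ac_simps)

lemma modsym_cong:
  assumes "modsym_space N cusp scale symb dia" "[u = u'] (mod int N)" "[v = v'] (mod int N)"
  shows "symb u v = symb u' v'"
proof -
  have "\<forall>u v. symb u v = symb (u mod int N) (v mod int N)"
    using assms(1) unfolding modsym_space_def by blast
  then show ?thesis using assms(2,3) unfolding cong_def by metis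
qed

lemma alpha_inner_cong:
  fixes m x y :: int
  assumes "modsym_space N cusp scale symb dia" "int N dvd int g * m" "[x = y] (mod m)"
  shows "alpha_inner N scale symb \<psi> g h x = alpha_inner N scale symb \<psi> g h y"
proof -
  have "int g * m dvd int g * (x - y)" using assms(3) by (simp add: cong_iff_dvd_diff)
  then have "[int g * x = int g * y] (mod int N)"
    using assms(2) dvd_trans by (simp add: cong_iff_dvd_diff right_diff_distrib)
  then show ?thesis unfolding alpha_inner_def using modsym_cong[OF assms(1)] by (metis cong_refl)
qed

lemma unimod_mult:
  fixes a b X Y :: int
  assumes "coprime a (int N)" "coprime b (int N)" "coprime X Y"
  shows "unimod N (X * a) (Y * b)"
proof -
  define q where "q = gcd (gcd (X * a) (Y * b)) (int N)"
  have "q dvd int N" "q dvd X * a" "q dvd Y * b"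
    unfolding q_def by (auto intro: dvd_trans[OF gcd_dvd1])
  then have "q dvd X" "q dvd Y"
    using assms(1,2) by (meson coprime_commute coprime_dvd_mult_left_iff coprime_divisors dvd_refl)+
  then have "is_unit q" by (rule coprime_common_divisor[OF assms(3)])
  then show ?thesis unfolding unimod_def q_def by simp
qed

lemma U_alpha_inner:
  fixes w a :: int
  assumes ms: "modsym_space N cusp scale symb dia" and U: "U_op N cusp scale symb dia l U"
    and l: "prime l" and t: "0 < t" and N: "N = l ^ t * D" and w: "[int g * w = 1] (mod int l)"
    and gh: "coprime (l ^ t * g) h" and cusp: "cusp \<longrightarrow> \<not> N dvd l ^ t * g"
    and a: "a \<in> units_mod N"
  shows "U (alpha_inner N scale symb \<psi> (l ^ (t - 1) * g) h (int l * a))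
       = (\<Sum>k<l. alpha_inner N scale symb \<psi> (l ^ (t - 1) * g) h ((a + int k * (int D * w)) mod int N))"
proof -
  interpret m: Modules.module scale using ms unfolding modsym_space_def by blast
  interpret u: Modules.module_hom scale scale U using U unfolding U_op_def by blast
  let ?G = "int (l ^ (t - 1) * g)" and ?c = "int D * w"
  have lG: "int l * ?G = int (l ^ t * g)" using t by (cases t) auto
  have N_div_l: "int (N div l) = int l ^ (t - 1) * int D" and N_eq: "int N = int l * int (N div l)"
    using t l N prime_gt_0_nat by (cases t; simp)+
  have shift: "[?G * a + int k * int (N div l) = ?G * ((a + int k * ?c) mod int N)] (mod int N)" for k
  proof -
    obtain z where z: "int g * w - 1 = int l * z"
      using w by (metis cong_iff_dvd_diff cong_sym dvd_def minus_diff_eq)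
    have "?G * (a + int k * ?c) - (?G * a + int k * int (N div l)) = int k * int (N div l) * (int g * w - 1)"
      unfolding N_div_l by (simp add: algebra_simps)
    also have "\<dots> = int N * (int k * z)" unfolding z N_eq by (simp add: algebra_simps)
    finally have "[?G * (a + int k * ?c) = ?G * a + int k * int (N div l)] (mod int N)"
      unfolding cong_iff_dvd_diff by (metis dvd_triv_left)
    then have "[?G * a + int k * int (N div l) = ?G * (a + int k * ?c)] (mod int N)"
      by (rule cong_sym)
    also have "[?G * (a + int k * ?c) = ?G * ((a + int k * ?c) mod int N)] (mod int N)"
      by (rule cong_scalar_left) (simp add: cong_def)
    finally show ?thesis .
  qed
  have U_symb: "U (symb (int l * (?G * a)) (int h * b))
      = (\<Sum>k<l. symb (?G * ((a + int k * ?c) mod int N)) (int h * b))" if b: "b \<in> units_mod N" for b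
  proof -
    have "coprime a (int N)" using a by (rule coprime_if_in_units_mod)
    have "unimod N (int (l ^ t * g) * a) (int h * b)"
      by (rule unimod_mult[OF \<open>coprime a (int N)\<close> coprime_if_in_units_mod[OF b]]) (use gh in simp)
    then have "unimod N (int l * (?G * a)) (int h * b)" unfolding mult.assoc[symmetric] lG .
    moreover have "cusp \<longrightarrow> (int l * (?G * a)) mod int N \<noteq> 0"
      using cusp lG \<open>coprime a (int N)\<close>
      by (auto simp: mult.assoc[symmetric] mod_eq_0_iff_dvd coprime_commute coprime_dvd_mult_left_iff
          simp flip: of_nat_mult)
    ultimately have "U (symb (int l * (?G * a)) (int h * b))
        = (\<Sum>k<l. symb (?G * a + int k * int (N div l)) (int h * b))"
      using U unfolding U_op_def by blast
    also have "\<dots> = (\<Sum>k<l. symb (?G * ((a + int k * ?c) mod int N)) (int h * b))"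
      by (intro sum.cong refl modsym_cong[OF ms shift cong_refl])
    finally show ?thesis .
  qed
  have "U (alpha_inner N scale symb \<psi> (l ^ (t - 1) * g) h (int l * a))
      = (\<Sum>b\<in>units_mod N. scale (cinv N \<psi> b) (U (symb (int l * (?G * a)) (int h * b))))"
    unfolding alpha_inner_def by (simp add: u.sum u.scale ac_simps)
  also have "\<dots> = (\<Sum>b\<in>units_mod N. \<Sum>k<l. scale (cinv N \<psi> b) (symb (?G * ((a + int k * ?c) mod int N)) (int h * b)))"
    by (rule sum.cong[OF refl]) (simp only: U_symb m.scale_sum_right)
  also have "\<dots> = (\<Sum>k<l. alpha_inner N scale symb \<psi> (l ^ (t - 1) * g) h ((a + int k * ?c) mod int N))"
    unfolding alpha_inner_def by (rule sum.swap)
  finally show ?thesis .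
qed

lemma U_alpha:
  fixes w :: int
  assumes ms: "modsym_space N cusp scale symb dia" and U: "U_op N cusp scale symb dia l U"
    and "prime l" "0 < t" "N = l ^ t * D" "[int g * w = 1] (mod int l)" "coprime (l ^ t * g) h"
    and "cusp \<longrightarrow> \<not> N dvd l ^ t * g"
  shows "U (alpha N scale symb \<chi> \<psi> (l ^ t * g) h)
       = scale (ring_inv ((of_nat (totient N))^2)) (twisted_sum N scale (cinv N \<chi>)
           (\<lambda>a. \<Sum>k<l. alpha_inner N scale symb \<psi> (l ^ (t - 1) * g) h ((a + int k * (int D * w)) mod int N)))"
proof -
  interpret m: Modules.module scale using ms unfolding modsym_space_def by blast
  interpret u: Modules.module_hom scale scale U using U unfolding U_op_def by blast
  have "l ^ t * g = l * (l ^ (t - 1) * g)" using assms(4) by (cases t) auto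
  then have "alpha_inner N scale symb \<psi> (l ^ t * g) h
      = (\<lambda>a. alpha_inner N scale symb \<psi> (l ^ (t - 1) * g) h (int l * a))"
    by (simp only:) (rule ext, rule alpha_inner_mult)
  then have "alpha N scale symb \<chi> \<psi> (l ^ t * g) h = scale (ring_inv ((of_nat (totient N))^2))
      (twisted_sum N scale (cinv N \<chi>) (\<lambda>a. alpha_inner N scale symb \<psi> (l ^ (t - 1) * g) h (int l * a)))"
    by (simp add: alpha_eq_twisted_sum[OF m.module_axioms])
  then have "U (alpha N scale symb \<chi> \<psi> (l ^ t * g) h) = scale (ring_inv ((of_nat (totient N))^2))
      (\<Sum>a\<in>units_mod N. scale (cinv N \<chi> a) (U (alpha_inner N scale symb \<psi> (l ^ (t - 1) * g) h (int l * a))))"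
    by (simp add: twisted_sum_def u.scale u.sum)
  also have "\<dots> = scale (ring_inv ((of_nat (totient N))^2)) (twisted_sum N scale (cinv N \<chi>)
      (\<lambda>a. \<Sum>k<l. alpha_inner N scale symb \<psi> (l ^ (t - 1) * g) h ((a + int k * (int D * w)) mod int N)))"
    unfolding twisted_sum_def
    by (intro arg_cong[where f = "scale _"] sum.cong refl U_alpha_inner[OF ms U assms(3-8)])
  finally show ?thesis .
qed

lemma U_alpha_below_top:
  assumes ms: "modsym_space N cusp scale symb dia" and U: "U_op N cusp scale symb dia l U"
    and l: "prime l" and t: "0 < t" and N: "N = l ^ t * D" and D: "0 < D" "l dvd D"
    and g: "\<not> l dvd g" and gh: "coprime g h" and h: "\<not> l dvd h"
    and \<chi>: "dchar N \<chi>" "conductor N \<chi> dvd D"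
  shows "U (alpha N scale symb \<chi> \<psi> (l ^ t * g) h)
       = scale (of_nat l) (alpha N scale symb \<chi> \<psi> (l ^ (t - 1) * g) h)"
proof -
  interpret m: Modules.module scale using ms unfolding modsym_space_def by blast
  obtain w where w: "[int g * w = 1] (mod int l)" using cong_inverse_mod_prime[OF l g] by blast
  have gh': "coprime (l ^ t * g) h" using gh prime_imp_power_coprime[OF l h] by (simp add: coprime_commute)
  have "\<not> N dvd l ^ t * g"
  proof
    assume "N dvd l ^ t * g"
    moreover have "l ^ t * l dvd N" using N D(2) by simp
    ultimately have "l ^ t * l dvd l ^ t * g" by (rule dvd_trans[rotated])
    then show False using g l by (simp add: prime_gt_0_nat)
  qed
  then have cusp: "cusp \<longrightarrow> \<not> N dvd l ^ t * g" by simp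
  have "int D dvd int N" "int D dvd int D * w" using N by simp_all
  moreover have "coprime x (int N)" if "coprime x (int D)" for x
  proof -
    have "coprime x (int l)" using that D(2) by (meson coprime_divisors dvd_refl int_dvd_int_iff)
    then show ?thesis using that N by simp
  qed
  moreover have "int (conductor N (cinv N \<chi>)) dvd int D" using \<chi> by (simp add: conductor_cinv)
  moreover have "0 < N" using N D(1) l by (simp add: prime_gt_0_nat)
  ultimately have shift_sum:
    "twisted_sum N scale (cinv N \<chi>) (\<lambda>a. \<Sum>k<l. W ((a + int k * (int D * w)) mod int N))
       = scale (of_nat l) (twisted_sum N scale (cinv N \<chi>) W)" for W
    using twisted_sum_shift_sum[OF m.module_axioms _ dchar_cinv[OF \<chi>(1)]] by blast
  show ?thesis
    unfolding U_alpha[OF ms U l t N w gh' cusp] shift_sum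
    by (simp add: alpha_eq_twisted_sum[OF m.module_axioms] m.scale_scale mult.commute)
qed

lemma U_alpha_top:
  assumes ms: "modsym_space N cusp scale symb dia" and U: "U_op N cusp scale symb dia l U"
    and l: "prime l" and s: "0 < s" and N: "N = l ^ s * D" and D: "0 < D" "coprime l D"
    and g: "\<not> l dvd g" and gh: "coprime g h" and h: "\<not> l dvd h"
    and \<chi>: "dchar N \<chi>" "conductor N \<chi> dvd D" and cusp: "cusp \<longrightarrow> \<not> N dvd l ^ s * g"
  shows "U (alpha N scale symb \<chi> \<psi> (l ^ s * g) h)
           - scale (prim_val N (cinv N \<chi>) l) (alpha N scale symb \<chi> \<psi> (l ^ s * g) h)
       = scale (of_nat l - 1) (alpha N scale symb \<chi> \<psi> (l ^ (s - 1) * g) h)"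
proof -
  interpret m: Modules.module scale using ms unfolding modsym_space_def by blast
  let ?C = "cinv N \<chi>" and ?W = "alpha_inner N scale symb \<psi> (l ^ (s - 1) * g) h"
    and ?r = "ring_inv ((of_nat (totient N))^2) :: 'a"
  obtain w where w: "[int g * w = 1] (mod int l)" "coprime w (int l)"
    using cong_inverse_mod_prime[OF l g] by blast
  have gh': "coprime (l ^ s * g) h" using gh prime_imp_power_coprime[OF l h] by (simp add: coprime_commute)
  have N_pos: "0 < N" using N D(1) l by (simp add: prime_gt_0_nat)
  have coprime_N: "coprime x (int N) \<longleftrightarrow> coprime x (int l) \<and> coprime x (int D)" for x
    using N s by simp
  obtain d where d: "[d = int l] (mod int D)" "[d = 1] (mod int l)"
    using binary_chinese_remainder_int[of "int D" "int l"] D(2) by (auto simp: coprime_commute)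
  have "coprime d (int N)"
    using coprime_cong_cong_left[OF d(1)] coprime_cong_cong_left[OF d(2)] D(2) coprime_N
    by (simp add: coprime_commute)
  have cond: "int (conductor N ?C) dvd int D" using \<chi> by (simp add: conductor_cinv)
  have prim_val: "prim_val N ?C l = ?C d"
    using prim_val_eq[OF dchar_cinv[OF \<chi>(1)] N_pos \<open>coprime d (int N)\<close>] cong_dvd_modulus[OF d(1) cond]
    by blast
  have periodic: "?W x = ?W y" if "[x = y] (mod int l * int D)" for x y
  proof (rule alpha_inner_cong[OF ms _ that])
    have "int (l ^ (s - 1) * g) * (int l * int D) = int g * int N" using N s by (cases s) auto
    then show "int N dvd int (l ^ (s - 1) * g) * (int l * int D)" by (metis dvd_triv_right)
  qed
  have "int l * int D dvd int N" using N s by (cases s) auto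
  moreover have "coprime (int D * w) (int l)" using D(2) w(2) by (simp add: coprime_commute)
  ultimately have top_sum: "twisted_sum N scale ?C (\<lambda>a. \<Sum>k<l. ?W ((a + int k * (int D * w)) mod int N))
      = scale (of_nat l - 1) (twisted_sum N scale ?C ?W) + scale (?C d) (twisted_sum N scale ?C (\<lambda>y. ?W (int l * y)))"
    using twisted_sum_shift_sum_split[OF m.module_axioms N_pos l dchar_cinv[OF \<chi>(1)] cond coprime_N]
      D(2) \<open>coprime d (int N)\<close> d(1) periodic by simp
  have "alpha_inner N scale symb \<psi> (l ^ s * g) h = (\<lambda>y. ?W (int l * y))"
    using s by (cases s) (simp_all add: alpha_inner_mult[symmetric] mult.assoc)
  then have alpha_top: "alpha N scale symb \<chi> \<psi> (l ^ s * g) h = scale ?r (twisted_sum N scale ?C (\<lambda>y. ?W (int l * y)))"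
    by (simp add: alpha_eq_twisted_sum[OF m.module_axioms])
  from U_alpha[OF ms U l s N w(1) gh' cusp, of \<chi> \<psi>]
  have "U (scale ?r (twisted_sum N scale ?C (\<lambda>y. ?W (int l * y))))
      = scale ?r (scale (of_nat l - 1) (twisted_sum N scale ?C ?W) + scale (?C d) (twisted_sum N scale ?C (\<lambda>y. ?W (int l * y))))"
    unfolding alpha_top top_sum .
  then show ?thesis
    unfolding alpha_top prim_val
    by (simp add: alpha_eq_twisted_sum[OF m.module_axioms] m.scale_right_distrib m.scale_scale mult.commute)
qed

theorem proposition2p20:
  fixes p M N l s t g h :: nat and cusp :: bool
    and scale :: "'r::comm_ring_1 \<Rightarrow> 'h::ab_group_add \<Rightarrow> 'h"
    and symb :: "int \<Rightarrow> int \<Rightarrow> 'h" and dia :: "int \<Rightarrow> 'h \<Rightarrow> 'h" and U :: "'h \<Rightarrow> 'h"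
    and \<theta> \<chi> \<psi> :: "int \<Rightarrow> 'r"
  assumes "prime p" and "odd p" and "0 < M" and "\<not> p dvd M * totient M" and "N = M * p"
    and "\<exists>c::'r. of_nat (totient N) * c = 1"
    and "modsym_space N cusp scale symb dia"
    and "prime l" and "l dvd N" and "s = multiplicity l N"
    and "U_op N cusp scale symb dia l U"
    and "g dvd N" and "h dvd N" and "coprime g h" and "\<not> l dvd g" and "\<not> l dvd h"
    and "dchar N \<theta>" and "\<theta> (-1) = 1"
    and "dchar N \<chi>"
    and "\<psi> = (\<lambda>a. \<theta> a * cinv N \<chi> a)"
    and "0 < t" and "t \<le> s" and "conductor N \<chi> dvd N div l ^ t"
  shows "(t < s \<longrightarrow>
            U (alpha N scale symb \<chi> \<psi> (l ^ t * g) h)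
              = scale (of_nat l) (alpha N scale symb \<chi> \<psi> (l ^ (t - 1) * g) h))
       \<and> (t = s \<and> (cusp \<longrightarrow> l ^ s * g \<noteq> N) \<longrightarrow>
            U (alpha N scale symb \<chi> \<psi> (l ^ s * g) h)
              - scale (prim_val N (cinv N \<chi>) l) (alpha N scale symb \<chi> \<psi> (l ^ s * g) h)
              = scale (of_nat l - 1) (alpha N scale symb \<chi> \<psi> (l ^ (s - 1) * g) h))"
proof -
  note ms = assms(7) and U = assms(11) and l = assms(8)
  have "N \<noteq> 0" "\<not> is_unit l" using assms(1,3,5) l by (auto simp: prime_gt_0_nat)
  then obtain N0 where N0: "N = l ^ s * N0" "\<not> l dvd N0"
    using multiplicity_decompose' assms(10) by metis
  have s: "0 < s" using multiplicity_gt_zero_iff[OF \<open>N \<noteq> 0\<close> \<open>\<not> is_unit l\<close>] assms(9,10) by simp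
  have "0 < N0" using N0(1) \<open>N \<noteq> 0\<close> by (simp add: gr0I)
  show ?thesis
  proof (intro conjI impI)
    assume "t < s"
    then have "N = l ^ t * (l ^ (s - t) * N0)" using N0(1) by (simp add: power_add[symmetric])
    then show "U (alpha N scale symb \<chi> \<psi> (l ^ t * g) h)
        = scale (of_nat l) (alpha N scale symb \<chi> \<psi> (l ^ (t - 1) * g) h)"
      using U_alpha_below_top[OF ms U l assms(21) _ _ _ assms(15,14,16,19)] assms(23) \<open>t < s\<close> \<open>0 < N0\<close> l
      by (simp add: prime_gt_0_nat)
  next
    assume "t = s \<and> (cusp \<longrightarrow> l ^ s * g \<noteq> N)"
    moreover have "g dvd N0"
      using assms(12) N0(1) prime_imp_power_coprime[OF l assms(15)] coprime_dvd_mult_right_iff by metis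
    ultimately have "cusp \<longrightarrow> \<not> N dvd l ^ s * g"
      using N0(1) l by (auto simp: prime_gt_0_nat dest: dvd_antisym)
    then show "U (alpha N scale symb \<chi> \<psi> (l ^ s * g) h)
        - scale (prim_val N (cinv N \<chi>) l) (alpha N scale symb \<chi> \<psi> (l ^ s * g) h)
        = scale (of_nat l - 1) (alpha N scale symb \<chi> \<psi> (l ^ (s - 1) * g) h)"
      using U_alpha_top[OF ms U l s N0(1) \<open>0 < N0\<close> _ assms(15,14,16,19)] prime_imp_coprime[OF l N0(2)]
        assms(23) \<open>t = s \<and> _\<close> N0(1) l by (simp add: prime_gt_0_nat)
  qed
qed

end
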